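(* For every $\epsilon>0$ there is a constant $C(\epsilon)>0$ such that $R_3(n)\le C(\epsilon)\, n^{1/3+\epsilon}$ for all positive integers $n$.
   Context: For a positive integer $n$, $R_3(n)$ denotes the number of ordered triples $(x,y,z)$ of positive integers with $n = xyz + x + y + z$. *)

theory Defs
  imports Complex_Main
begin

definition R3 :: "nat \<Rightarrow> nat" where
  "R3 n = card {(x :: nat, y :: nat, z :: nat). 0 < x \<and> 0 < y \<and> 0 < z \<and> n = x * y * z + x + y + z}"

end

theory Submission
  imports Defs "HOL-Computational_Algebra.Primes"
begin

text \<open>Multiplying n = xyz + x + y + z by x gives (xy + 1)(xz + 1) = xn + 1 - x^2, so for fixed x
  every solution is determined by the divisor xy + 1 of xn + 1 - x^2 \<le> n^2. By symmetry one may
  assume that x is the smallest coordinate, i.e. x^3 \<le> n, which leaves at most n^(1/3) values of x.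
  The classical divisor bound d(m) = O(m^\<epsilon>) then gives R_3(n) = O(n^(1/3 + \<epsilon>)).\<close>

definition divisor_count :: "nat \<Rightarrow> nat" where
  "divisor_count m = card {d. d dvd m}"

text \<open>No positivity hypotheses are needed: 0 has infinitely many divisors, so its count is 0.\<close>

lemma divisor_count_mult_le: "divisor_count (a * b) \<le> divisor_count a * divisor_count b"
proof (cases "a = 0 \<or> b = 0")
  case True
  then show ?thesis by (auto simp: divisor_count_def)
next
  case False
  have "{d. d dvd a * b} \<subseteq> (\<lambda>(u, v). u * v) ` ({u. u dvd a} \<times> {v. v dvd b})"
    by (auto elim!: dvd_productE)
  then have "divisor_count (a * b) \<le> card ((\<lambda>(u, v). u * v) ` ({u. u dvd a} \<times> {v. v dvd b}))"
    unfolding divisor_count_def using False by (intro card_mono finite_imageI) auto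
  also have "\<dots> \<le> card ({u. u dvd a} \<times> {v. v dvd b})"
    using False by (intro card_image_le) auto
  finally show ?thesis by (simp add: divisor_count_def card_cartesian_product)
qed

lemma divisor_count_prod_le: "divisor_count (\<Prod>i\<in>A. f i) \<le> (\<Prod>i\<in>A. divisor_count (f i))"
proof (induction A rule: infinite_finite_induct)
  case (insert i A)
  then show ?case
    using divisor_count_mult_le[of "f i" "prod f A"] by (simp add: order_trans mult_le_mono2)
qed (simp_all add: divisor_count_def)

lemma divisor_count_prime_power:
  assumes "prime (p :: nat)"
  shows "divisor_count (p ^ k) = Suc k"
proof -
  have "{d. d dvd p ^ k} = (\<lambda>i. p ^ i) ` {..k}"
    using divides_primepow_nat[OF assms] by auto
  moreover have "inj_on (\<lambda>i. p ^ i) {..k}"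
    using prime_gt_1_nat[OF assms] by (intro inj_onI) (simp add: power_inject_exp)
  ultimately show ?thesis
    unfolding divisor_count_def by (simp add: card_image)
qed

lemma Suc_le_powr_mult:
  fixes \<epsilon> b :: real
  assumes "\<epsilon> > 0" and "b \<ge> 2"
  shows "real (Suc k) \<le> (1 + 1 / (\<epsilon> * ln 2)) * (b ^ k) powr \<epsilon>"
proof -
  define K where "K = 1 + 1 / (\<epsilon> * ln 2)"
  have K: "K \<ge> 1" "K * (\<epsilon> * ln 2) \<ge> 1"
    using assms unfolding K_def by (auto simp: field_simps)
  have "2 powr (real k * \<epsilon>) = exp (real k * \<epsilon> * ln 2)"
    by (simp add: powr_def)
  also have "\<dots> \<ge> 1 + real k * \<epsilon> * ln 2"
    by (rule exp_ge_add_one_self)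
  finally have exp_bound: "1 + real k * \<epsilon> * ln 2 \<le> 2 powr (real k * \<epsilon>)" .
  have "real (Suc k) = 1 + real k * 1"
    by simp
  also have "\<dots> \<le> K + real k * (K * (\<epsilon> * ln 2))"
    using K by (intro add_mono mult_left_mono) auto
  also have "\<dots> = K * (1 + real k * \<epsilon> * ln 2)"
    by (simp add: algebra_simps)
  also have "\<dots> \<le> K * 2 powr (real k * \<epsilon>)"
    using exp_bound K by (intro mult_left_mono) auto
  also have "\<dots> \<le> K * b powr (real k * \<epsilon>)"
    using assms K by (intro mult_left_mono powr_mono2) auto
  also have "\<dots> = K * (b ^ k) powr \<epsilon>"
    using assms by (simp add: powr_realpow[symmetric] powr_powr)
  finally show ?thesis unfolding K_def .
qed

lemma Suc_le_powr:
  fixes \<epsilon> b :: real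
  assumes "\<epsilon> > 0" and "b \<ge> 2 powr (1 / \<epsilon>)"
  shows "real (Suc k) \<le> (b ^ k) powr \<epsilon>"
proof -
  have "2 = (2 powr (1 / \<epsilon>)) powr \<epsilon>"
    using assms by (simp add: powr_powr)
  also have "\<dots> \<le> b powr \<epsilon>"
    using assms by (intro powr_mono2) auto
  finally have two_le: "2 \<le> b powr \<epsilon>" .
  have "b > 0"
    using assms(2) powr_gt_zero[of 2 "1 / \<epsilon>"] by linarith
  have "real (Suc k) \<le> 2 ^ k"
    by (induction k) auto
  also have "\<dots> \<le> (b powr \<epsilon>) ^ k"
    using two_le by (intro power_mono) auto
  also have "\<dots> = (b ^ k) powr \<epsilon>"
    using \<open>b > 0\<close> by (simp add: powr_realpow[symmetric] powr_powr mult.commute)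
  finally show ?thesis .
qed

text \<open>Writing m = \<Prod> p^k, each factor k + 1 is at most (p^k)^\<epsilon> once p \<ge> 2^(1/\<epsilon>),
  and at most a fixed multiple K of it for the finitely many smaller primes.\<close>

lemma divisor_count_le_powr:
  fixes \<epsilon> :: real
  assumes "\<epsilon> > 0"
  shows "\<exists>C > 0. \<forall>m > 0. real (divisor_count m) \<le> C * real m powr \<epsilon>"
proof -
  define P where "P = nat \<lceil>2 powr (1 / \<epsilon>)\<rceil>"
  define K where "K = 1 + 1 / (\<epsilon> * ln 2)"
  define c where "c = (\<lambda>p :: nat. if p < P then K else 1)"
  have "K \<ge> 1"
    using assms unfolding K_def by simp
  have prime_power_bound: "real (Suc k) \<le> c p * (real p ^ k) powr \<epsilon>" if "prime p" for p k
  proof (cases "p < P")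
    case True
    then show ?thesis
      using Suc_le_powr_mult[OF assms] prime_ge_2_nat[OF that] unfolding c_def K_def by simp
  next
    case False
    then have "2 powr (1 / \<epsilon>) \<le> real p"
      unfolding P_def by linarith
    then show ?thesis
      using Suc_le_powr[OF assms] False unfolding c_def by simp
  qed
  show ?thesis
  proof (intro exI[of _ "K ^ P"] conjI allI impI)
    show "K ^ P > 0"
      using \<open>K \<ge> 1\<close> by simp
    fix m :: nat
    assume "m > 0"
    let ?A = "prime_factors m" and ?e = "\<lambda>p. multiplicity p m"
    have "real (divisor_count m) = real (divisor_count (\<Prod>p\<in>?A. p ^ ?e p))"
      using prime_factorization_nat[OF \<open>m > 0\<close>] by simp
    also have "\<dots> \<le> real (\<Prod>p\<in>?A. divisor_count (p ^ ?e p))"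
      using divisor_count_prod_le of_nat_le_iff by blast
    also have "\<dots> = (\<Prod>p\<in>?A. real (Suc (?e p)))"
      by (simp add: divisor_count_prime_power in_prime_factors_imp_prime del: of_nat_Suc)
    also have "\<dots> \<le> (\<Prod>p\<in>?A. c p * (real p ^ ?e p) powr \<epsilon>)"
      using prime_power_bound by (intro prod_mono) auto
    also have "\<dots> = prod c ?A * (\<Prod>p\<in>?A. (real p ^ ?e p) powr \<epsilon>)"
      by (simp add: prod.distrib)
    also have "(\<Prod>p\<in>?A. (real p ^ ?e p) powr \<epsilon>) = real m powr \<epsilon>"
      using prime_factorization_nat[OF \<open>m > 0\<close>]
      by (metis (no_types, lifting) of_nat_power of_nat_prod prod_powr_distrib prod.cong)
    also have "prod c ?A = K ^ card (?A \<inter> {..<P})"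
      unfolding c_def by (simp add: prod.If_cases Int_def)
    also have "\<dots> \<le> K ^ P"
      using \<open>K \<ge> 1\<close> card_mono[of "{..<P}" "?A \<inter> {..<P}"] by (intro power_increasing) auto
    finally show "real (divisor_count m) \<le> K ^ P * real m powr \<epsilon>"
      by (simp add: mult_right_mono)
  qed
qed

definition R3_solutions :: "nat \<Rightarrow> (nat \<times> nat \<times> nat) set" where
  "R3_solutions n = {(x, y, z). 0 < x \<and> 0 < y \<and> 0 < z \<and> n = x * y * z + x + y + z}"

definition R3_fiber :: "nat \<Rightarrow> nat \<Rightarrow> (nat \<times> nat) set" where
  "R3_fiber n x = {(y, z). 0 < y \<and> 0 < z \<and> n = x * y * z + x + y + z}"

lemma card_R3_fiber_le_divisor_count:
  assumes "(x :: nat) > 0" and "x \<le> n"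
  shows "card (R3_fiber n x) \<le> divisor_count (x * n + 1 - x * x)"
proof -
  let ?F = "R3_fiber n x"
  have factorization: "(x * y + 1) * (x * z + 1) = x * n + 1 - x * x"
    if "n = x * y * z + x + y + z" for y z
  proof -
    have "(x * y + 1) * (x * z + 1) + x * x = x * n + 1"
      unfolding that by (simp add: algebra_simps)
    then show ?thesis by simp
  qed
  have "inj_on (\<lambda>(y, z). x * y + 1) ?F"
  proof (rule inj_onI)
    fix p q
    assume "p \<in> ?F" "q \<in> ?F" and "(\<lambda>(y, z). x * y + 1) p = (\<lambda>(y, z). x * y + 1) q"
    moreover obtain y z y' z' where "p = (y, z)" "q = (y', z')"
      by fastforce
    ultimately have "y = y'" and "x * y * z + x + y + z = x * y * z' + x + y + z'"
      using assms(1) unfolding R3_fiber_def by auto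
    then have "(x * y + 1) * z = (x * y + 1) * z'"
      by (simp add: algebra_simps)
    then show "p = q"
      using \<open>p = (y, z)\<close> \<open>q = (y', z')\<close> \<open>y = y'\<close> mult_left_cancel[of "x * y + 1" z z'] by simp
  qed
  moreover have "(\<lambda>(y, z). x * y + 1) ` ?F \<subseteq> {d. d dvd x * n + 1 - x * x}"
  proof -
    have "x * y + 1 dvd x * n + 1 - x * x" if "n = x * y * z + x + y + z" for y z
      unfolding factorization[OF that, symmetric] by (rule dvd_triv_left)
    then show ?thesis
      unfolding R3_fiber_def by auto
  qed
  moreover have "x * n + 1 - x * x > 0"
    using assms by (simp add: le_imp_less_Suc mult_le_mono2)
  ultimately show ?thesis
    unfolding divisor_count_def by (intro card_inj_on_le) auto
qed

lemma R3_eq_card: "R3 n = card (R3_solutions n)"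
  unfolding R3_def R3_solutions_def ..

lemma R3_solutions_swap:
  assumes "(x, y, z) \<in> R3_solutions n"
  shows "(y, x, z) \<in> R3_solutions n" and "(z, y, x) \<in> R3_solutions n"
  using assms unfolding R3_solutions_def by (simp_all add: algebra_simps)

lemma cube_le_R3_solution:
  assumes "(x, y, z) \<in> R3_solutions n" and "x \<le> y" and "x \<le> z"
  shows "x ^ 3 \<le> n"
proof -
  have "x ^ 3 \<le> x * y * z"
    using assms(2,3) by (simp add: power3_eq_cube mult_le_mono)
  then show ?thesis
    using assms(1) unfolding R3_solutions_def by simp
qed

lemma finite_R3_solutions: "finite (R3_solutions n)"
proof (rule finite_subset)
  show "R3_solutions n \<subseteq> {..n} \<times> {..n} \<times> {..n}"
    unfolding R3_solutions_def by auto
qed simp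

lemma R3_le_3_card_small_first:
  "R3 n \<le> 3 * card {(x, y, z) \<in> R3_solutions n. x ^ 3 \<le> n}"
proof -
  let ?S = "R3_solutions n"
  define U where "U = {(x, y, z) \<in> ?S. x ^ 3 \<le> n}"
  define swap12 where "swap12 = (\<lambda>(x :: nat, y :: nat, z :: nat). (y, x, z))"
  define swap13 where "swap13 = (\<lambda>(x :: nat, y :: nat, z :: nat). (z, y, x))"
  have "?S \<subseteq> U \<union> swap12 ` U \<union> swap13 ` U"
  proof
    fix t
    assume "t \<in> ?S"
    moreover obtain x y z where t: "t = (x, y, z)"
      by (cases t)
    ultimately have sol: "(x, y, z) \<in> ?S"
      by simp
    consider "x \<le> y" "x \<le> z" | "y \<le> x" "y \<le> z" | "z \<le> x" "z \<le> y"
      by linarith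
    then have "(x, y, z) \<in> U \<union> swap12 ` U \<union> swap13 ` U"
    proof cases
      case 1
      then have "(x, y, z) \<in> U"
        using sol cube_le_R3_solution unfolding U_def by auto
      then show ?thesis
        by blast
    next
      case 2
      then have "(y, x, z) \<in> U"
        using R3_solutions_swap(1)[OF sol] cube_le_R3_solution unfolding U_def by auto
      then show ?thesis
        unfolding swap12_def by force
    next
      case 3
      then have "(z, y, x) \<in> U"
        using R3_solutions_swap(2)[OF sol] cube_le_R3_solution unfolding U_def by auto
      then show ?thesis
        unfolding swap13_def by force
    qed
    then show "t \<in> U \<union> swap12 ` U \<union> swap13 ` U"
      unfolding t .
  qed
  moreover have "finite U"
    unfolding U_def by (rule finite_subset[OF _ finite_R3_solutions]) auto
  ultimately have "card ?S \<le> card U + card (swap12 ` U) + card (swap13 ` U)"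
    by (meson card_Un_le card_mono finite_UnI finite_imageI order_trans add_le_mono1)
  also have "\<dots> \<le> 3 * card U"
    using card_image_le[OF \<open>finite U\<close>, of swap12] card_image_le[OF \<open>finite U\<close>, of swap13]
    by simp
  finally show ?thesis
    unfolding R3_eq_card U_def .
qed

lemma le_of_cube_le:
  assumes "0 < (x :: nat)" and "x ^ 3 \<le> n"
  shows "x \<le> n"
proof -
  have "x \<le> x ^ 3"
    using assms(1) by (simp add: self_le_power)
  then show ?thesis
    using assms(2) by linarith
qed

lemma card_small_first_eq_sum_R3_fiber:
  "card {(x, y, z) \<in> R3_solutions n. x ^ 3 \<le> n}
     = (\<Sum>x | 0 < x \<and> x ^ 3 \<le> n. card (R3_fiber n x))"
proof -
  have "{(x, y, z) \<in> R3_solutions n. x ^ 3 \<le> n} = Sigma {x. 0 < x \<and> x ^ 3 \<le> n} (R3_fiber n)"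
    unfolding R3_solutions_def R3_fiber_def by auto
  moreover have "finite {x :: nat. 0 < x \<and> x ^ 3 \<le> n}"
    by (rule finite_subset[of _ "{..n}"]) (auto intro: le_of_cube_le)
  moreover have "finite (R3_fiber n x)" for x
    by (rule finite_subset[of _ "{..n} \<times> {..n}"]) (auto simp: R3_fiber_def)
  ultimately show ?thesis
    by (simp add: card_SigmaI)
qed

lemma card_positive_cubes_le: "real (card {x. 0 < x \<and> x ^ 3 \<le> n}) \<le> real n powr (1/3)"
proof -
  define k where "k = nat \<lfloor>real n powr (1/3)\<rfloor>"
  have "{x. 0 < x \<and> x ^ 3 \<le> n} \<subseteq> {1..k}"
  proof clarify
    fix x :: nat
    assume "0 < x" "x ^ 3 \<le> n"
    have "real x = (real x powr 3) powr (1/3)"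
      by (subst powr_powr) (use \<open>0 < x\<close> in simp)
    also have "\<dots> = real (x ^ 3) powr (1/3)"
      using \<open>0 < x\<close> by (simp add: powr_realpow)
    also have "\<dots> \<le> real n powr (1/3)"
      using \<open>x ^ 3 \<le> n\<close> by (intro powr_mono2) auto
    finally have "x \<le> k"
      unfolding k_def by linarith
    then show "x \<in> {1..k}"
      using \<open>0 < x\<close> by simp
  qed
  then have "card {x. 0 < x \<and> x ^ 3 \<le> n} \<le> k"
    by (metis card_atLeastAtMost card_mono diff_Suc_1 finite_atLeastAtMost)
  then have "real (card {x. 0 < x \<and> x ^ 3 \<le> n}) \<le> real k"
    by simp
  also have "\<dots> \<le> real n powr (1/3)"
    unfolding k_def by simp
  finally show ?thesis .
qed

lemma card_R3_fiber_le_powr: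
  fixes \<delta> C :: real
  assumes divisor_bound: "\<forall>m > 0. real (divisor_count m) \<le> C * real m powr \<delta>"
    and "C \<ge> 0" "\<delta> \<ge> 0" "0 < x" "x \<le> n"
  shows "real (card (R3_fiber n x)) \<le> C * real n powr (2 * \<delta>)"
proof -
  have "x * x \<le> x * n" "x * n \<le> n * n" "1 \<le> x * x"
    using assms(4,5) by simp_all
  then have "x * n + 1 - x * x > 0" "x * n + 1 - x * x \<le> n * n"
    by linarith+
  then have "real (card (R3_fiber n x)) \<le> C * real (x * n + 1 - x * x) powr \<delta>"
    using card_R3_fiber_le_divisor_count[OF assms(4,5)] divisor_bound by (meson of_nat_le_iff order_trans)
  also have "\<dots> \<le> C * (real n * real n) powr \<delta>"
    using \<open>x * n + 1 - x * x \<le> n * n\<close> assms(2,3)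
    by (intro mult_left_mono powr_mono2) (auto simp flip: of_nat_mult)
  also have "(real n * real n) powr \<delta> = real n powr (2 * \<delta>)"
    by (simp add: powr_mult powr_add[symmetric])
  finally show ?thesis .
qed

theorem theorem2:
  fixes \<epsilon> :: real
  assumes "\<epsilon> > 0"
  shows "\<exists>C > 0. \<forall>n :: nat. n > 0 \<longrightarrow> real (R3 n) \<le> C * real n powr (1/3 + \<epsilon>)"
proof -
  obtain C where "C > 0"
    and divisor_bound: "\<forall>m > 0. real (divisor_count m) \<le> C * real m powr (\<epsilon> / 2)"
    using divisor_count_le_powr[of "\<epsilon> / 2"] assms by auto
  have "real (R3 n) \<le> 3 * C * real n powr (1/3 + \<epsilon>)" for n
  proof -
    let ?I = "{x. 0 < x \<and> x ^ 3 \<le> n}"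
    have "real (R3 n) \<le> 3 * (\<Sum>x\<in>?I. real (card (R3_fiber n x)))"
      using R3_le_3_card_small_first[of n] card_small_first_eq_sum_R3_fiber[of n]
      by (simp flip: of_nat_sum)
    also have "\<dots> \<le> 3 * (\<Sum>x\<in>?I. C * real n powr \<epsilon>)"
      using card_R3_fiber_le_powr[OF divisor_bound] \<open>C > 0\<close> assms
      by (intro mult_left_mono sum_mono) (auto intro: le_of_cube_le)
    also have "\<dots> \<le> 3 * (real n powr (1/3) * (C * real n powr \<epsilon>))"
      using card_positive_cubes_le[of n] \<open>C > 0\<close> by (simp add: mult_right_mono)
    finally show ?thesis
      by (simp add: powr_add algebra_simps)
  qed
  then show ?thesis
    using \<open>C > 0\<close> by (intro exI[of _ "3 * C"]) simp
qed

end
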